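(* Let $G$ be a strongly connected digraph with $N>2$ nodes, and let all nodes run the Privacy-Preserving Push-Sum Algorithm described in the context. Then for every node $i$, with probability one, $$\lim_{k\to\infty}\hat x^{ave}_i(k)=\lim_{k\to\infty}\frac{x^\alpha_{i,1}(k)}{x^\alpha_{i,2}(k)}=\frac1N\sum_{j=1}^N x_j(0),\qquad \lim_{k\to\infty}\frac{x^\beta_{i,1}(k)}{x^\beta_{i,2}(k)}=\frac1N\sum_{j=1}^N x_j(0).$$
   Context: Digraph conventions: $\mathcal V=\{1,\dots,N\}$, no self-loops; $(j,i)\in\mathcal E$ means node $i$ can send messages to node $j$. $N_i^{in}=\{j:(i,j)\in\mathcal E\}$, $N_i^{out}=\{j:(j,i)\in\mathcal E\}$. Strongly connected: a directed path exists from any node to any other node. Privacy-Preserving Push-Sum Algorithm (each node $i$ has a private real initial state $x_i(0)$; $M>0$ is a fixed constant). Initialization: node $i$ draws $x^\alpha_{i,1}(0)\sim U(-M,M)$ and sets $x^\beta_{i,1}(0)=2x_i(0)-x^\alpha_{i,1}(0)$, $x^\alpha_{i,2}(0)=0$, $x^\beta_{i,2}(0)=2$. Weights: at $k=0$, node $i$ draws the numbers $\{p_{ji}(0):j\in N_i^{out}\cup\{i\}\}$ and $\alpha_i(0)$ independently from $\mathcal N(0,M)$ and normalizes them so that $\sum_{j=1}^N p_{ji}(0)+\alpha_i(0)=1$; at each $k\ge1$, node $i$ draws $\{p_{ji}(k):j\in N_i^{out}\cup\{i\}\}$ and $\alpha_i(k)$ independently from $U(0,1)$ and normalizes them so that $\sum_{j=1}^N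 p_{ji}(k)+\alpha_i(k)=1$; in all cases $p_{ji}(k)=0$ if $j\notin N_i^{out}\cup\{i\}$. State update, for $k\ge0$, $l=1,2$: node $i$ sends $p_{ji}(k)x^\alpha_{i,l}(k)$ to each $j\in N_i^{out}$ and updates $$x^\alpha_{i,l}(k+1)=\sum_{j\in N_i^{in}\cup\{i\}}p_{ij}(k)x^\alpha_{j,l}(k)+x^\beta_{i,l}(k),\qquad x^\beta_{i,l}(k+1)=\alpha_i(k)x^\alpha_{i,l}(k).$$ Node $i$'s estimated average is $\hat x^{ave}_i(k+1)=x^\alpha_{i,1}(k+1)/x^\alpha_{i,2}(k+1)$. The substate $x^\beta_{i,l}$ is never transmitted. *)

theory Defs
  imports "HOL-Probability.Probability"
begin

text \<open>Digraph conventions: a pair (j,i) in E means node i can send to node j.\<close>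

definition in_nb :: "(nat \<times> nat) set \<Rightarrow> nat \<Rightarrow> nat set" where
  "in_nb E i = {j. (i, j) \<in> E}"

definition out_nb :: "(nat \<times> nat) set \<Rightarrow> nat \<Rightarrow> nat set" where
  "out_nb E i = {j. (j, i) \<in> E}"

text \<open>Strongly connected: for all nodes i, j of V there is a directed path from i to j
  (a path i -> a -> j consists of edges (a,i), (j,a), so it is (j,i) in E^*).\<close>
definition strongly_connected :: "nat set \<Rightarrow> (nat \<times> nat) set \<Rightarrow> bool" where
  "strongly_connected V E \<longleftrightarrow> (\<forall>i\<in>V. \<forall>j\<in>V. (j, i) \<in> E\<^sup>*)"

text \<open>Labels of the random draws: the initial mask x^alpha_{i,1}(0) of node i,
  the raw (unnormalised) weight for p_{ji}(k), and the raw weight for alpha_i(k).\<close>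
datatype draw = DInit nat | DP nat nat nat | DA nat nat

definition draw_index :: "nat set \<Rightarrow> (nat \<times> nat) set \<Rightarrow> draw set" where
  "draw_index V E =
     DInit ` V
     \<union> {DP j i k | j i k. i \<in> V \<and> j \<in> out_nb E i \<union> {i}}
     \<union> {DA i k | i k. i \<in> V}"

definition unif_density :: "real \<Rightarrow> real \<Rightarrow> real \<Rightarrow> ennreal" where
  "unif_density a b x = ennreal (indicator {a<..<b} x / (b - a))"

text \<open>N(0,M) is read as the normal law with mean 0 and variance M
  (standard deviation sqrt M).\<close>
definition draw_density :: "real \<Rightarrow> draw \<Rightarrow> real \<Rightarrow> ennreal" where
  "draw_density Mc d = (case d of
      DInit _ \<Rightarrow> unif_density (- Mc) Mc
    | DP _ _ k \<Rightarrow> (if k = 0 then (\<lambda>x. ennreal (normal_density 0 (sqrt Mc) x)) else unif_density 0 1)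
    | DA _ k \<Rightarrow> (if k = 0 then (\<lambda>x. ennreal (normal_density 0 (sqrt Mc) x)) else unif_density 0 1))"

definition wden :: "(nat \<times> nat) set \<Rightarrow> (draw \<Rightarrow> real) \<Rightarrow> nat \<Rightarrow> nat \<Rightarrow> real" where
  "wden E d i k = (\<Sum>j\<in>out_nb E i \<union> {i}. d (DP j i k)) + d (DA i k)"

definition pw :: "(nat \<times> nat) set \<Rightarrow> (draw \<Rightarrow> real) \<Rightarrow> nat \<Rightarrow> nat \<Rightarrow> nat \<Rightarrow> real" where
  "pw E d j i k = (if j \<in> out_nb E i \<union> {i} then d (DP j i k) / wden E d i k else 0)"

definition aw :: "(nat \<times> nat) set \<Rightarrow> (draw \<Rightarrow> real) \<Rightarrow> nat \<Rightarrow> nat \<Rightarrow> real" where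
  "aw E d i k = d (DA i k) / wden E d i k"

text \<open>State update (for one index l): returns (x^alpha(k), x^beta(k)) as functions of the node.
  p j i k is the weight p_{ji}(k), a i k is alpha_i(k).\<close>
primrec pp_state :: "(nat \<times> nat) set \<Rightarrow> (nat \<Rightarrow> nat \<Rightarrow> nat \<Rightarrow> real) \<Rightarrow> (nat \<Rightarrow> nat \<Rightarrow> real)
    \<Rightarrow> (nat \<Rightarrow> real) \<times> (nat \<Rightarrow> real) \<Rightarrow> nat \<Rightarrow> (nat \<Rightarrow> real) \<times> (nat \<Rightarrow> real)" where
  "pp_state E p a s0 0 = s0"
| "pp_state E p a s0 (Suc k) =
     (let xa = fst (pp_state E p a s0 k); xb = snd (pp_state E p a s0 k) in
      ((\<lambda>i. (\<Sum>j\<in>in_nb E i \<union> {i}. p i j k * xa j) + xb i),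
       (\<lambda>i. a i k * xa i)))"

text \<open>l = 1: initial x^alpha_{i,1}(0) = drawn mask, x^beta_{i,1}(0) = 2 x_i(0) - mask.\<close>
definition state1 :: "(nat \<times> nat) set \<Rightarrow> (nat \<Rightarrow> real) \<Rightarrow> (draw \<Rightarrow> real) \<Rightarrow> nat
    \<Rightarrow> (nat \<Rightarrow> real) \<times> (nat \<Rightarrow> real)" where
  "state1 E x0 d k = pp_state E (pw E d) (aw E d)
      ((\<lambda>i. d (DInit i)), (\<lambda>i. 2 * x0 i - d (DInit i))) k"

text \<open>l = 2: x^alpha_{i,2}(0) = 0, x^beta_{i,2}(0) = 2.\<close>
definition state2 :: "(nat \<times> nat) set \<Rightarrow> (draw \<Rightarrow> real) \<Rightarrow> nat
    \<Rightarrow> (nat \<Rightarrow> real) \<times> (nat \<Rightarrow> real)" where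
  "state2 E d k = pp_state E (pw E d) (aw E d) ((\<lambda>i. 0), (\<lambda>i. 2)) k"

end

theory Submission
  imports Defs
begin

text \<open>Stack the two substates of every node into one vector indexed by (node, layer). Both
  runs \<open>l = 1, 2\<close> then evolve by the same column-stochastic matrices \<open>C(k)\<close>, which are
  nonnegative for \<open>k \<ge> 1\<close>; from \<open>k = 2\<close> on the second run is positive, so at every entry
  the ratio of the two runs is a convex combination of the previous ratios, and the spread
  between the largest and smallest ratio never increases. By strong connectivity there is a
  length \<open>L\<close> such that any entry reaches any other along \<open>L\<close> edges of the graph of \<open>C(k)\<close>;
  hence over a block of \<open>L\<close> steps in which all raw weights are at least \<open>1/2\<close> the product of
  the matrices is entrywise at least some \<open>\<delta> > 0\<close> and the spread shrinks by the factor
  \<open>1 - \<delta>\<close>. Such blocks occur infinitely often almost surely by independence. Column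
  stochasticity, which at \<open>k = 0\<close> (Gaussian weights, possibly negative) only needs the
  normalisers to be nonzero, conserves the sums \<open>2 \<Sum>\<^sub>j x\<^sub>j(0)\<close> and \<open>2 N\<close> of the two runs,
  which identifies the common limit of the ratios.\<close>

section \<open>Products of a sequence of matrices\<close>

fun mat_seq_prod :: "'a set \<Rightarrow> (nat \<Rightarrow> 'a \<Rightarrow> 'a \<Rightarrow> real) \<Rightarrow> nat \<Rightarrow> nat \<Rightarrow> 'a \<Rightarrow> 'a \<Rightarrow> real" where
  "mat_seq_prod V C k 0 a b = of_bool (a = b)"
| "mat_seq_prod V C k (Suc n) a b = (\<Sum>c\<in>V. C (k + n) a c * mat_seq_prod V C k n c b)"

lemma mat_seq_prod_apply:
  assumes "finite V" and step: "\<And>k a. a \<in> V \<Longrightarrow> u (Suc k) a = (\<Sum>b\<in>V. C k a b * u k b)"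
    and "a \<in> V"
  shows "u (k + n) a = (\<Sum>b\<in>V. mat_seq_prod V C k n a b * u k b)"
  using \<open>a \<in> V\<close>
proof (induction n arbitrary: a)
  case 0
  then show ?case using \<open>finite V\<close> by simp
next
  case (Suc n)
  have "u (k + Suc n) a = (\<Sum>c\<in>V. C (k + n) a c * (\<Sum>b\<in>V. mat_seq_prod V C k n c b * u k b))"
    using step[OF Suc.prems] Suc.IH by (simp cong: sum.cong)
  also have "\<dots> = (\<Sum>b\<in>V. \<Sum>c\<in>V. C (k + n) a c * mat_seq_prod V C k n c b * u k b)"
    by (subst sum.swap) (simp add: sum_distrib_left mult.assoc)
  also have "\<dots> = (\<Sum>b\<in>V. mat_seq_prod V C k (Suc n) a b * u k b)"
    by (simp add: sum_distrib_right)
  finally show ?case .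
qed

lemma mat_seq_prod_nonneg:
  assumes "\<And>m a b. m < n \<Longrightarrow> a \<in> V \<Longrightarrow> b \<in> V \<Longrightarrow> 0 \<le> C (k + m) a b" and "a \<in> V"
  shows "0 \<le> mat_seq_prod V C k n a b"
  using assms by (induction n arbitrary: a) (auto intro!: sum_nonneg mult_nonneg_nonneg)

lemma mat_seq_prod_ge_power:
  assumes "finite V" and "0 \<le> \<delta>" and "R \<subseteq> V \<times> V"
    and nonneg: "\<And>m a b. m < n \<Longrightarrow> a \<in> V \<Longrightarrow> b \<in> V \<Longrightarrow> 0 \<le> C (k + m) a b"
    and edge: "\<And>m a b. m < n \<Longrightarrow> (b, a) \<in> R \<Longrightarrow> \<delta> \<le> C (k + m) a b"
    and "(b, a) \<in> R ^^ n"
  shows "\<delta> ^ n \<le> mat_seq_prod V C k n a b"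
  using nonneg edge \<open>(b, a) \<in> R ^^ n\<close>
proof (induction n arbitrary: a)
  case 0
  then show ?case by simp
next
  case (Suc n)
  from \<open>(b, a) \<in> R ^^ Suc n\<close> obtain c where bc: "(b, c) \<in> R ^^ n" and ca: "(c, a) \<in> R"
    by (rule relpow_Suc_E)
  have V: "a \<in> V" "c \<in> V" using ca \<open>R \<subseteq> V \<times> V\<close> by auto
  have nonneg_terms: "0 \<le> C (k + n) a c' * mat_seq_prod V C k n c' b" if "c' \<in> V" for c'
    using Suc.prems(1) V that by (auto intro!: mult_nonneg_nonneg mat_seq_prod_nonneg)
  have "\<delta> ^ Suc n = \<delta> * \<delta> ^ n" by simp
  also have "\<dots> \<le> C (k + n) a c * mat_seq_prod V C k n c b"
    using Suc bc ca V \<open>0 \<le> \<delta>\<close> by (intro mult_mono) auto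
  also have "\<dots> \<le> (\<Sum>c'\<in>V. C (k + n) a c' * mat_seq_prod V C k n c' b)"
    using \<open>finite V\<close> V nonneg_terms by (intro member_le_sum) auto
  finally show ?case by simp
qed

lemma relpow_add_loop:
  assumes "(b, a) \<in> R ^^ n" and "(a, a) \<in> R"
  shows "(b, a) \<in> R ^^ (n + m)"
  by (induction m) (use assms in \<open>auto intro: relpow_Suc_I\<close>)

section \<open>Consensus of the ratio of two linear runs\<close>

locale ratio_consensus =
  fixes V :: "'a set" and C :: "nat \<Rightarrow> 'a \<Rightarrow> 'a \<Rightarrow> real" and s t :: "nat \<Rightarrow> 'a \<Rightarrow> real"
    and k0 :: nat and S T :: real
  assumes finite_V: "finite V" and V_nonempty: "V \<noteq> {}"
    and s_Suc: "\<And>k a. a \<in> V \<Longrightarrow> s (Suc k) a = (\<Sum>b\<in>V. C k a b * s k b)"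
    and t_Suc: "\<And>k a. a \<in> V \<Longrightarrow> t (Suc k) a = (\<Sum>b\<in>V. C k a b * t k b)"
    and C_nonneg: "\<And>k a b. k0 \<le> k \<Longrightarrow> a \<in> V \<Longrightarrow> b \<in> V \<Longrightarrow> 0 \<le> C k a b"
    and t_pos: "\<And>k a. k0 \<le> k \<Longrightarrow> a \<in> V \<Longrightarrow> 0 < t k a"
    and sum_s: "\<And>k. k0 \<le> k \<Longrightarrow> (\<Sum>a\<in>V. s k a) = S"
    and sum_t: "\<And>k. k0 \<le> k \<Longrightarrow> (\<Sum>a\<in>V. t k a) = T"
begin

definition ratio :: "nat \<Rightarrow> 'a \<Rightarrow> real" where
  "ratio k a = s k a / t k a"

definition ratio_max :: "nat \<Rightarrow> real" where
  "ratio_max k = Max (ratio k ` V)"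

definition ratio_min :: "nat \<Rightarrow> real" where
  "ratio_min k = Min (ratio k ` V)"

definition spread :: "nat \<Rightarrow> real" where
  "spread k = ratio_max k - ratio_min k"

definition mix :: "nat \<Rightarrow> nat \<Rightarrow> 'a \<Rightarrow> 'a \<Rightarrow> real" where
  "mix k n a b = mat_seq_prod V C k n a b * t k b / t (k + n) a"

lemma ratio_le_max: "a \<in> V \<Longrightarrow> ratio k a \<le> ratio_max k"
  unfolding ratio_max_def using finite_V by (intro Max_ge) auto

lemma min_le_ratio: "a \<in> V \<Longrightarrow> ratio_min k \<le> ratio k a"
  unfolding ratio_min_def using finite_V by (intro Min_le) auto

lemma spread_nonneg: "0 \<le> spread k"
proof -
  obtain a where "a \<in> V" using V_nonempty by auto
  then show ?thesis
    unfolding spread_def using min_le_ratio ratio_le_max by (meson diff_ge_0_iff_ge order_trans)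
qed

lemma T_pos: "0 < T"
  using sum_t[of k0] t_pos[of k0] finite_V V_nonempty by (metis order_refl sum_pos)

lemma t_le_T:
  assumes "k0 \<le> k" and "a \<in> V"
  shows "t k a \<le> T"
proof -
  have "t k a \<le> sum (t k) V"
    using assms finite_V t_pos by (intro member_le_sum) (auto intro: less_imp_le)
  then show ?thesis using sum_t[OF \<open>k0 \<le> k\<close>] by simp
qed

lemma mix_nonneg:
  assumes "k0 \<le> k" and "a \<in> V" and "b \<in> V"
  shows "0 \<le> mix k n a b"
proof -
  have "0 \<le> mat_seq_prod V C k n a b"
    using assms by (intro mat_seq_prod_nonneg C_nonneg) auto
  then show ?thesis
    unfolding mix_def using assms t_pos[of k b] t_pos[of "k + n" a]
    by (intro divide_nonneg_pos mult_nonneg_nonneg) auto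
qed

lemma sum_mix:
  assumes "k0 \<le> k" and "a \<in> V"
  shows "(\<Sum>b\<in>V. mix k n a b) = 1"
proof -
  have "t (k + n) a = (\<Sum>b\<in>V. mat_seq_prod V C k n a b * t k b)"
    using mat_seq_prod_apply[where u = t, OF finite_V t_Suc \<open>a \<in> V\<close>] .
  then show ?thesis
    using t_pos[of "k + n" a] assms by (simp add: mix_def sum_divide_distrib[symmetric])
qed

lemma ratio_eq_mix_average:
  assumes "k0 \<le> k" and "a \<in> V"
  shows "ratio (k + n) a = (\<Sum>b\<in>V. mix k n a b * ratio k b)"
proof -
  have "s (k + n) a = (\<Sum>b\<in>V. mat_seq_prod V C k n a b * s k b)"
    using mat_seq_prod_apply[where u = s, OF finite_V s_Suc \<open>a \<in> V\<close>] .
  also have "\<dots> = (\<Sum>b\<in>V. mat_seq_prod V C k n a b * t k b * ratio k b)"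
    using t_pos[OF \<open>k0 \<le> k\<close>] by (intro sum.cong) (auto simp: ratio_def less_imp_neq[symmetric])
  finally show ?thesis
    by (simp add: ratio_def[of "k + n"] mix_def sum_divide_distrib)
qed

lemma mix_average_bounds:
  assumes "k0 \<le> k" and "a \<in> V"
  shows "ratio (k + n) a \<le> ratio_max k" and "ratio_min k \<le> ratio (k + n) a"
proof -
  have "ratio (k + n) a \<le> (\<Sum>b\<in>V. mix k n a b * ratio_max k)"
    unfolding ratio_eq_mix_average[OF assms]
    using assms by (intro sum_mono mult_left_mono ratio_le_max mix_nonneg)
  then show "ratio (k + n) a \<le> ratio_max k"
    using sum_mix[OF assms] by (simp add: sum_distrib_right[symmetric])
  have "(\<Sum>b\<in>V. mix k n a b * ratio_min k) \<le> ratio (k + n) a"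
    unfolding ratio_eq_mix_average[OF assms]
    using assms by (intro sum_mono mult_left_mono min_le_ratio mix_nonneg)
  then show "ratio_min k \<le> ratio (k + n) a"
    using sum_mix[OF assms] by (simp add: sum_distrib_right[symmetric])
qed

lemma spread_antimono:
  assumes "k0 \<le> k" and "k \<le> k'"
  shows "spread k' \<le> spread k"
proof -
  obtain n where k': "k' = k + n" using \<open>k \<le> k'\<close> le_Suc_ex by blast
  have "ratio_max k' \<le> ratio_max k"
    unfolding k' ratio_max_def[of "k + n"] using finite_V V_nonempty mix_average_bounds(1)[OF assms(1)]
    by (intro Max.boundedI) auto
  moreover have "ratio_min k \<le> ratio_min k'"
    unfolding k' ratio_min_def[of "k + n"] using finite_V V_nonempty mix_average_bounds(2)[OF assms(1)]
    by (intro Min.boundedI) auto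
  ultimately show ?thesis unfolding spread_def by simp
qed

lemma average_within_ratio_range:
  assumes "k0 \<le> k"
  shows "ratio_min k \<le> S / T" and "S / T \<le> ratio_max k"
proof -
  have S: "S = (\<Sum>a\<in>V. t k a * ratio k a)"
  proof -
    have "s k a = t k a * ratio k a" if "a \<in> V" for a
      using t_pos[OF assms that] by (simp add: ratio_def)
    then show ?thesis using sum_s[OF assms] by (auto intro: sum.cong)
  qed
  have "T * ratio_min k = (\<Sum>a\<in>V. t k a * ratio_min k)"
    using sum_t[OF assms] by (simp add: sum_distrib_right[symmetric])
  also have "\<dots> \<le> S"
    unfolding S by (intro sum_mono mult_left_mono min_le_ratio) (auto intro: less_imp_le t_pos[OF assms])
  finally show "ratio_min k \<le> S / T" using T_pos by (simp add: le_divide_eq mult.commute)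
  have "S \<le> (\<Sum>a\<in>V. t k a * ratio_max k)"
    unfolding S by (intro sum_mono mult_left_mono ratio_le_max) (auto intro: less_imp_le t_pos[OF assms])
  also have "\<dots> = T * ratio_max k"
    using sum_t[OF assms] by (simp add: sum_distrib_right[symmetric])
  finally show "S / T \<le> ratio_max k" using T_pos by (simp add: divide_le_eq mult.commute)
qed


lemma mix_ge:
  assumes "k0 \<le> k" and "0 \<le> \<delta>" and "a \<in> V" and "b \<in> V"
    and "\<delta> \<le> mat_seq_prod V C k n a b"
  shows "\<delta> * t k b / T \<le> mix k n a b"
proof -
  have t: "0 < t k b" "0 < t (k + n) a" "t (k + n) a \<le> T"
    using assms t_pos t_le_T by auto
  have "\<delta> * t k b / T \<le> \<delta> * t k b / t (k + n) a"
    using t assms by (intro divide_left_mono) auto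
  also have "\<dots> \<le> mix k n a b"
    unfolding mix_def using t assms by (intro divide_right_mono mult_right_mono) auto
  finally show ?thesis .
qed

lemma mix_overlap_ge:
  assumes "k0 \<le> k" and "0 \<le> \<delta>"
    and lower: "\<And>a b. a \<in> V \<Longrightarrow> b \<in> V \<Longrightarrow> \<delta> \<le> mat_seq_prod V C k n a b"
    and "a \<in> V" and "a' \<in> V"
  shows "\<delta> \<le> (\<Sum>b\<in>V. min (mix k n a b) (mix k n a' b))"
proof -
  have "\<delta> = (\<Sum>b\<in>V. \<delta> * t k b / T)"
    using sum_t[OF \<open>k0 \<le> k\<close>] T_pos
    by (simp add: sum_divide_distrib[symmetric] sum_distrib_left[symmetric])
  also have "\<dots> \<le> (\<Sum>b\<in>V. min (mix k n a b) (mix k n a' b))"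
    using assms by (intro sum_mono min.boundedI mix_ge) auto
  finally show ?thesis .
qed

text \<open>The common part of the mixing weights of the maximising and the minimising node
  cancels in the difference of their ratios.\<close>
lemma spread_contraction:
  assumes "k0 \<le> k" and "0 \<le> \<delta>"
    and lower: "\<And>a b. a \<in> V \<Longrightarrow> b \<in> V \<Longrightarrow> \<delta> \<le> mat_seq_prod V C k n a b"
  shows "spread (k + n) \<le> (1 - \<delta>) * spread k"
proof -
  have "ratio_max (k + n) \<in> ratio (k + n) ` V" "ratio_min (k + n) \<in> ratio (k + n) ` V"
    unfolding ratio_max_def ratio_min_def using finite_V V_nonempty by (intro Max_in Min_in; simp)+
  then obtain a a' where a: "a \<in> V" "ratio (k + n) a = ratio_max (k + n)"
    and a': "a' \<in> V" "ratio (k + n) a' = ratio_min (k + n)"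
    by (metis imageE)
  define w where "w = mix k n a"
  define w' where "w' = mix k n a'"
  define \<mu> where "\<mu> b = min (w b) (w' b)" for b
  have overlap: "\<delta> \<le> (\<Sum>b\<in>V. \<mu> b)"
    unfolding \<mu>_def w_def w'_def by (rule mix_overlap_ge[OF assms a(1) a'(1)])
  have "ratio (k + n) a = (\<Sum>b\<in>V. \<mu> b * ratio k b) + (\<Sum>b\<in>V. (w b - \<mu> b) * ratio k b)"
    unfolding ratio_eq_mix_average[OF \<open>k0 \<le> k\<close> a(1)] w_def
    by (simp add: sum.distrib[symmetric] algebra_simps)
  also have "(\<Sum>b\<in>V. (w b - \<mu> b) * ratio k b) \<le> (\<Sum>b\<in>V. (w b - \<mu> b) * ratio_max k)"
    by (intro sum_mono mult_left_mono ratio_le_max) (auto simp: \<mu>_def)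
  also have "\<dots> = (1 - (\<Sum>b\<in>V. \<mu> b)) * ratio_max k"
    using sum_mix[OF \<open>k0 \<le> k\<close> a(1)]
    by (simp add: w_def sum_distrib_right[symmetric] sum_subtractf)
  finally have upper: "ratio (k + n) a \<le> (\<Sum>b\<in>V. \<mu> b * ratio k b) + (1 - (\<Sum>b\<in>V. \<mu> b)) * ratio_max k"
    by simp
  have "(1 - (\<Sum>b\<in>V. \<mu> b)) * ratio_min k = (\<Sum>b\<in>V. (w' b - \<mu> b) * ratio_min k)"
    using sum_mix[OF \<open>k0 \<le> k\<close> a'(1)]
    by (simp add: w'_def sum_distrib_right[symmetric] sum_subtractf)
  also have "\<dots> \<le> (\<Sum>b\<in>V. (w' b - \<mu> b) * ratio k b)"
    by (intro sum_mono mult_left_mono min_le_ratio) (auto simp: \<mu>_def)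
  finally have "(\<Sum>b\<in>V. \<mu> b * ratio k b) + (1 - (\<Sum>b\<in>V. \<mu> b)) * ratio_min k
      \<le> (\<Sum>b\<in>V. \<mu> b * ratio k b) + (\<Sum>b\<in>V. (w' b - \<mu> b) * ratio k b)"
    by simp
  also have "\<dots> = ratio (k + n) a'"
    unfolding ratio_eq_mix_average[OF \<open>k0 \<le> k\<close> a'(1)] w'_def
    by (simp add: sum.distrib[symmetric] algebra_simps)
  finally have lower: "(\<Sum>b\<in>V. \<mu> b * ratio k b) + (1 - (\<Sum>b\<in>V. \<mu> b)) * ratio_min k
      \<le> ratio (k + n) a'" .
  have "spread (k + n) \<le> (1 - (\<Sum>b\<in>V. \<mu> b)) * spread k"
    using upper lower a(2) a'(2) unfolding spread_def by (simp add: algebra_simps)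
  also have "\<dots> \<le> (1 - \<delta>) * spread k"
    using overlap spread_nonneg by (intro mult_right_mono) auto
  finally show ?thesis .
qed

lemma spread_tendsto_zero:
  assumes "0 < \<delta>" and "\<delta> \<le> 1" and "0 < L"
    and often: "\<And>m0. \<exists>m\<ge>m0. \<forall>a\<in>V. \<forall>b\<in>V. \<delta> \<le> mat_seq_prod V C (k0 + m * L) L a b"
  shows "spread \<longlonglongrightarrow> 0"
proof -
  have decay: "\<exists>K\<ge>k0. spread K \<le> (1 - \<delta>) ^ j * spread k0" for j
  proof (induction j)
    case 0
    then show ?case by auto
  next
    case (Suc j)
    then obtain K where K: "k0 \<le> K" "spread K \<le> (1 - \<delta>) ^ j * spread k0" by auto
    obtain m where m: "K \<le> m" "\<forall>a\<in>V. \<forall>b\<in>V. \<delta> \<le> mat_seq_prod V C (k0 + m * L) L a b"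
      using often by blast
    have "m \<le> m * L" using \<open>0 < L\<close> by simp
    then have "K \<le> k0 + m * L" using m(1) by linarith
    have "spread (k0 + m * L + L) \<le> (1 - \<delta>) * spread (k0 + m * L)"
      using m(2) \<open>0 < \<delta>\<close> by (intro spread_contraction) auto
    also have "\<dots> \<le> (1 - \<delta>) * spread K"
      using spread_antimono[OF K(1) \<open>K \<le> k0 + m * L\<close>] \<open>\<delta> \<le> 1\<close> by (intro mult_left_mono) auto
    also have "\<dots> \<le> (1 - \<delta>) ^ Suc j * spread k0"
      using mult_left_mono[OF K(2), of "1 - \<delta>"] \<open>\<delta> \<le> 1\<close> by (simp add: mult.assoc)
    finally show ?case by (intro exI[of _ "k0 + m * L + L"]) auto
  qed
  show ?thesis
  proof (rule LIMSEQ_I)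
    fix e :: real
    assume "0 < e"
    have "0 < e / (spread k0 + 1)"
      using \<open>0 < e\<close> spread_nonneg[of k0] by simp
    then obtain j where j: "(1 - \<delta>) ^ j < e / (spread k0 + 1)"
      using real_arch_pow_inv[of "e / (spread k0 + 1)" "1 - \<delta>"] \<open>0 < \<delta>\<close> by auto
    obtain K where K: "k0 \<le> K" "spread K \<le> (1 - \<delta>) ^ j * spread k0"
      using decay by blast
    have "(1 - \<delta>) ^ j * spread k0 \<le> (1 - \<delta>) ^ j * (spread k0 + 1)"
      using \<open>\<delta> \<le> 1\<close> by (intro mult_left_mono) auto
    also have "\<dots> < e"
      using j spread_nonneg[of k0] by (simp add: pos_less_divide_eq)
    finally have "spread K < e"
      using K(2) by linarith
    then have "norm (spread k - 0) < e" if "K \<le> k" for k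
      using spread_antimono[OF K(1) that] spread_nonneg[of k] by simp
    then show "\<exists>K. \<forall>k\<ge>K. norm (spread k - 0) < e" by blast
  qed
qed

lemma ratio_tendsto_average:
  assumes "0 < \<delta>" and "\<delta> \<le> 1" and "0 < L"
    and often: "\<And>m0. \<exists>m\<ge>m0. \<forall>a\<in>V. \<forall>b\<in>V. \<delta> \<le> mat_seq_prod V C (k0 + m * L) L a b"
    and "a \<in> V"
  shows "(\<lambda>k. s k a / t k a) \<longlonglongrightarrow> S / T"
proof -
  have "(\<lambda>k. ratio k a - S / T) \<longlonglongrightarrow> 0"
  proof (rule Lim_null_comparison)
    show "\<forall>\<^sub>F k in sequentially. norm (ratio k a - S / T) \<le> spread k"
      using eventually_ge_at_top[of k0]
    proof eventually_elim
      case (elim k)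
      show ?case
        using mix_average_bounds[OF elim \<open>a \<in> V\<close>, of 0] average_within_ratio_range[OF elim]
        unfolding spread_def by auto
    qed
    show "spread \<longlonglongrightarrow> 0"
      by (rule spread_tendsto_zero[OF assms(1-4)])
  qed
  then show ?thesis by (simp add: LIM_zero_iff ratio_def)
qed

end

section \<open>The push-sum update as a linear system\<close>

lemma sum_conserved_column_stochastic:
  fixes C :: "nat \<Rightarrow> 'a \<Rightarrow> 'a \<Rightarrow> 'b::comm_semiring_1"
  assumes "finite W"
    and step: "\<And>k a. a \<in> W \<Longrightarrow> u (Suc k) a = (\<Sum>b\<in>W. C k a b * u k b)"
    and column: "\<And>k b. b \<in> W \<Longrightarrow> (\<Sum>a\<in>W. C k a b) = 1"
  shows "(\<Sum>a\<in>W. u k a) = (\<Sum>a\<in>W. u 0 a)"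
proof (induction k)
  case 0
  then show ?case by simp
next
  case (Suc k)
  have "(\<Sum>a\<in>W. u (Suc k) a) = (\<Sum>a\<in>W. \<Sum>b\<in>W. C k a b * u k b)"
    using step by simp
  also have "\<dots> = (\<Sum>b\<in>W. \<Sum>a\<in>W. C k a b * u k b)"
    by (rule sum.swap)
  also have "\<dots> = (\<Sum>b\<in>W. (\<Sum>a\<in>W. C k a b) * u k b)"
    by (simp add: sum_distrib_right)
  also have "\<dots> = (\<Sum>b\<in>W. u k b)"
    using column by simp
  finally show ?case using Suc.IH by simp
qed

text \<open>The two substates of node \<open>i\<close> become the entries \<open>(i, False)\<close> (for \<open>x\<^sup>\<alpha>\<close>) and
  \<open>(i, True)\<close> (for \<open>x\<^sup>\<beta>\<close>) of one vector, which evolves linearly.\<close>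
fun stack :: "(nat \<Rightarrow> real) \<times> (nat \<Rightarrow> real) \<Rightarrow> nat \<times> bool \<Rightarrow> real" where
  "stack x (i, b) = (if b then snd x i else fst x i)"

fun pp_matrix :: "(nat \<times> nat) set \<Rightarrow> (draw \<Rightarrow> real) \<Rightarrow> nat \<Rightarrow> nat \<times> bool \<Rightarrow> nat \<times> bool \<Rightarrow> real" where
  "pp_matrix E d k (i, bi) (j, bj) =
     (if bi then (if bj then 0 else of_bool (i = j) * aw E d i k)
      else if bj then of_bool (i = j) else pw E d i j k)"

lemma sum_pairs_bool:
  assumes "finite V"
  shows "(\<Sum>a\<in>V \<times> UNIV. f a) = (\<Sum>i\<in>V. f (i, False) + f (i, True))"
proof -
  have "(\<Sum>a\<in>V \<times> UNIV. f a) = (\<Sum>i\<in>V. \<Sum>b\<in>UNIV. f (i, b))"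
    by (simp add: sum.cartesian_product)
  then show ?thesis by (simp add: UNIV_bool add.commute)
qed

lemma stack_pp_state_Suc:
  assumes "finite V" and "E \<subseteq> V \<times> V" and "a \<in> V \<times> UNIV"
  shows "stack (pp_state E (pw E d) (aw E d) x0 (Suc k)) a =
    (\<Sum>b\<in>V \<times> UNIV. pp_matrix E d k a b * stack (pp_state E (pw E d) (aw E d) x0 k) b)"
proof -
  obtain i bi where a: "a = (i, bi)" "i \<in> V" using assms(3) by auto
  define x where "x = pp_state E (pw E d) (aw E d) x0 k"
  have "(\<Sum>j\<in>in_nb E i \<union> {i}. pw E d i j k * fst x j) = (\<Sum>j\<in>V. pw E d i j k * fst x j)"
    using assms(1,2) a(2)
    by (intro sum.mono_neutral_left) (auto simp: pw_def in_nb_def out_nb_def)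
  then show ?thesis
    using assms(1) a by (simp add: sum_pairs_bool x_def[symmetric] Let_def sum.distrib mult.assoc)
qed

lemma pp_matrix_column_sum:
  assumes "finite V" and "E \<subseteq> V \<times> V" and "j \<in> V" and "wden E d j k \<noteq> 0"
  shows "(\<Sum>a\<in>V \<times> UNIV. pp_matrix E d k a (j, bj)) = 1"
proof (cases bj)
  case True
  then show ?thesis using assms by (simp add: sum_pairs_bool)
next
  case False
  have "(\<Sum>i\<in>V. pw E d i j k) = (\<Sum>i\<in>out_nb E j \<union> {j}. d (DP i j k) / wden E d j k)"
    using assms by (intro sum.mono_neutral_cong_right) (auto simp: pw_def out_nb_def)
  then have "(\<Sum>i\<in>V. pw E d i j k) + aw E d j k = wden E d j k / wden E d j k"
    by (simp add: aw_def wden_def sum_divide_distrib[symmetric] add_divide_distrib[symmetric])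
  then show ?thesis
    using assms False by (simp add: sum_pairs_bool sum.distrib)
qed

lemma sum_stack_pp_state:
  assumes "finite V" and "E \<subseteq> V \<times> V" and "\<And>j k. j \<in> V \<Longrightarrow> wden E d j k \<noteq> 0"
  shows "(\<Sum>a\<in>V \<times> UNIV. stack (pp_state E (pw E d) (aw E d) x0 k) a) =
    (\<Sum>i\<in>V. fst x0 i + snd x0 i)"
proof -
  have "(\<Sum>a\<in>V \<times> UNIV. stack (pp_state E (pw E d) (aw E d) x0 k) a) =
      (\<Sum>a\<in>V \<times> UNIV. stack (pp_state E (pw E d) (aw E d) x0 0) a)"
    using assms stack_pp_state_Suc pp_matrix_column_sum
    by (intro sum_conserved_column_stochastic[where C = "pp_matrix E d"]) auto
  then show ?thesis
    using assms(1) by (simp add: sum_pairs_bool)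
qed

definition draws_in_unit_interval :: "nat \<Rightarrow> (nat \<times> nat) set \<Rightarrow> (draw \<Rightarrow> real) \<Rightarrow> bool" where
  "draws_in_unit_interval N E d \<longleftrightarrow> (\<forall>k\<ge>1. \<forall>i\<in>{1..N}.
     (\<forall>j\<in>out_nb E i \<union> {i}. 0 < d (DP j i k) \<and> d (DP j i k) < 1) \<and> 0 < d (DA i k) \<and> d (DA i k) < 1)"

text \<open>\<open>(b, a)\<close> is an edge if the entry \<open>(a, b)\<close> of the stacked update matrix is bounded
  below whenever all draws of the step are at least \<open>1/2\<close>.\<close>
definition pp_edges :: "nat \<Rightarrow> (nat \<times> nat) set \<Rightarrow> ((nat \<times> bool) \<times> (nat \<times> bool)) set" where
  "pp_edges N E =
     {((j, False), (i, False)) | i j. i \<in> {1..N} \<and> j \<in> {1..N} \<and> ((i, j) \<in> E \<or> i = j)}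
     \<union> {((i, False), (i, True)) | i. i \<in> {1..N}}
     \<union> {((i, True), (i, False)) | i. i \<in> {1..N}}"

lemma out_nb_subset: "E \<subseteq> V \<times> V \<Longrightarrow> i \<in> V \<Longrightarrow> out_nb E i \<union> {i} \<subseteq> V"
  by (auto simp: out_nb_def)

context
  fixes N :: nat and E :: "(nat \<times> nat) set" and d :: "draw \<Rightarrow> real" and k :: nat
  assumes E: "E \<subseteq> {1..N} \<times> {1..N}" and unit: "draws_in_unit_interval N E d" and "1 \<le> k"
begin

lemma wden_bounds:
  assumes "i \<in> {1..N}"
  shows "0 < wden E d i k" and "wden E d i k \<le> real N + 1"
proof -
  have draws: "\<forall>j\<in>out_nb E i \<union> {i}. 0 < d (DP j i k) \<and> d (DP j i k) < 1"
    "0 < d (DA i k)" "d (DA i k) < 1"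
    using unit \<open>1 \<le> k\<close> assms unfolding draws_in_unit_interval_def by auto
  have "0 \<le> (\<Sum>j\<in>out_nb E i \<union> {i}. d (DP j i k))"
    using draws(1) by (intro sum_nonneg) (auto intro: less_imp_le)
  then show "0 < wden E d i k"
    using draws(2) unfolding wden_def by simp
  have "(\<Sum>j\<in>out_nb E i \<union> {i}. d (DP j i k)) \<le> real (card (out_nb E i \<union> {i}))"
    using draws(1) sum_mono[of "out_nb E i \<union> {i}" "\<lambda>j. d (DP j i k)" "\<lambda>_. 1"] by fastforce
  also have "\<dots> \<le> real N"
    using card_mono[OF _ out_nb_subset[OF E assms]] by simp
  finally show "wden E d i k \<le> real N + 1"
    using draws(3) unfolding wden_def by simp
qed

lemma pw_aw_nonneg:
  assumes "j \<in> {1..N}"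
  shows "0 \<le> pw E d i j k" and "0 \<le> aw E d j k"
  using wden_bounds[OF assms] unit \<open>1 \<le> k\<close> assms
  unfolding pw_def aw_def draws_in_unit_interval_def by (auto intro!: divide_nonneg_pos less_imp_le)

lemma pw_aw_self_pos:
  assumes "i \<in> {1..N}"
  shows "0 < pw E d i i k" and "0 < aw E d i k"
  using wden_bounds[OF assms] unit \<open>1 \<le> k\<close> assms
  unfolding pw_def aw_def draws_in_unit_interval_def by auto

lemma pp_matrix_nonneg:
  assumes "a \<in> {1..N} \<times> UNIV" and "b \<in> {1..N} \<times> UNIV"
  shows "0 \<le> pp_matrix E d k a b"
  using assms pw_aw_nonneg by (cases a; cases b) auto

lemma pp_matrix_edge_ge:
  assumes half: "\<forall>i\<in>{1..N}. (\<forall>j\<in>out_nb E i \<union> {i}. 1/2 \<le> d (DP j i k)) \<and> 1/2 \<le> d (DA i k)"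
    and edge: "(b, a) \<in> pp_edges N E"
  shows "1 / (2 * (real N + 1)) \<le> pp_matrix E d k a b"
proof -
  have normalized: "1 / (2 * (real N + 1)) \<le> x / wden E d j k" if "j \<in> {1..N}" "1/2 \<le> x" for j x
  proof -
    have w: "0 < wden E d j k" "wden E d j k \<le> real N + 1"
      using wden_bounds[OF that(1)] by auto
    have "1 / (2 * (real N + 1)) = (1/2) / (real N + 1)" by simp
    also have "\<dots> \<le> (1/2) / wden E d j k" using w by (intro divide_left_mono) auto
    also have "\<dots> \<le> x / wden E d j k" using w that by (intro divide_right_mono) auto
    finally show ?thesis .
  qed
  have "1 / (2 * (real N + 1)) \<le> 1" by (simp add: field_simps)
  with edge half normalized show ?thesis
    unfolding pp_edges_def by (auto simp: pw_def aw_def out_nb_def)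
qed

end

lemma relpow_pp_edges:
  assumes E: "E \<subseteq> {1..N} \<times> {1..N}" and "strongly_connected {1..N} E"
  shows "\<exists>L>0. \<forall>a\<in>{1..N} \<times> UNIV. \<forall>b\<in>{1..N} \<times> UNIV. (b, a) \<in> pp_edges N E ^^ L"
proof -
  let ?R = "pp_edges N E"
  have "((j, False), (i, False)) \<in> ?R\<^sup>*" if "(i, j) \<in> E\<^sup>*" for i j
    using that
  proof (induction rule: converse_rtrancl_induct)
    case base
    then show ?case by simp
  next
    case (step y z)
    then have "((z, False), (y, False)) \<in> ?R"
      using E unfolding pp_edges_def by blast
    with step.IH show ?case by simp
  qed
  then have "\<forall>p\<in>{1..N} \<times> {1..N}. \<exists>n. ((snd p, False), (fst p, False)) \<in> ?R ^^ n"
    using \<open>strongly_connected {1..N} E\<close> unfolding strongly_connected_def rtrancl_power by auto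
  then obtain len where len: "\<And>i j. i \<in> {1..N} \<Longrightarrow> j \<in> {1..N} \<Longrightarrow>
      ((j, False), (i, False)) \<in> ?R ^^ len (i, j)"
    by (metis bchoice mem_Sigma_iff prod.sel)
  define L where "L = Max (len ` ({1..N} \<times> {1..N}))"
  have core: "((j, False), (i, False)) \<in> ?R ^^ L" if "i \<in> {1..N}" "j \<in> {1..N}" for i j
  proof -
    have "len (i, j) \<le> L" unfolding L_def using that by (intro Max_ge) auto
    moreover have "((i, False), (i, False)) \<in> ?R" using that unfolding pp_edges_def by blast
    ultimately show ?thesis
      using relpow_add_loop[OF len[OF that], of "L - len (i, j)"] by simp
  qed
  have "(b, a) \<in> ?R ^^ Suc (Suc L)" if ab_V: "a \<in> {1..N} \<times> UNIV" "b \<in> {1..N} \<times> UNIV" for a b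
  proof -
    obtain i bi j bj where ab: "a = (i, bi)" "b = (j, bj)" "i \<in> {1..N}" "j \<in> {1..N}"
      using ab_V by auto
    have "(b, (j, False)) \<in> ?R" "((i, False), a) \<in> ?R"
      using ab unfolding pp_edges_def by (cases bi; cases bj; auto)+
    then show ?thesis using core[OF ab(3,4)] by (blast intro: relpow_Suc_I relpow_Suc_I2)
  qed
  then show ?thesis by blast
qed

lemma state2_pos_nonneg:
  assumes E: "E \<subseteq> {1..N} \<times> {1..N}" and unit: "draws_in_unit_interval N E d" and "1 \<le> k"
  shows "\<forall>i\<in>{1..N}. 0 < fst (state2 E d k) i \<and> 0 \<le> snd (state2 E d k) i"
  using \<open>1 \<le> k\<close>
proof (induction k rule: dec_induct)
  case base
  then show ?case by (simp add: state2_def)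
next
  case (step k)
  let ?x = "fst (state2 E d k)"
  show ?case
  proof
    fix i
    assume i: "i \<in> {1..N}"
    have in_nb_V: "in_nb E i \<union> {i} \<subseteq> {1..N}"
      using E i by (auto simp: in_nb_def)
    have "0 < pw E d i i k * ?x i"
      using pw_aw_self_pos[OF E unit step.hyps(1) i] step.IH i by simp
    also have "\<dots> \<le> (\<Sum>j\<in>in_nb E i \<union> {i}. pw E d i j k * ?x j)"
      using step.IH in_nb_V pw_aw_nonneg[OF E unit step.hyps(1)] finite_subset[OF in_nb_V]
      by (intro member_le_sum mult_nonneg_nonneg) (auto intro: less_imp_le)
    finally show "0 < fst (state2 E d (Suc k)) i \<and> 0 \<le> snd (state2 E d (Suc k)) i"
      using step.IH i pw_aw_self_pos[OF E unit step.hyps(1) i]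
      by (simp add: state2_def Let_def add_pos_nonneg less_imp_le)
  qed
qed

lemma stack_state2_pos:
  assumes "E \<subseteq> {1..N} \<times> {1..N}" and "draws_in_unit_interval N E d" and "2 \<le> k"
    and "a \<in> {1..N} \<times> UNIV"
  shows "0 < stack (state2 E d k) a"
proof -
  obtain k' where k': "k = Suc k'" "1 \<le> k'" using \<open>2 \<le> k\<close> by (cases k) auto
  obtain i b where a: "a = (i, b)" "i \<in> {1..N}" using assms(4) by auto
  have "snd (state2 E d k) i = aw E d i k' * fst (state2 E d k') i"
    using k' by (simp add: state2_def Let_def)
  then show ?thesis
    using a pw_aw_self_pos[OF assms(1,2) k'(2) a(2)] state2_pos_nonneg[OF assms(1,2)] k'
    by auto
qed

fun dtime :: "draw \<Rightarrow> nat" where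
  "dtime (DInit _) = 0"
| "dtime (DP _ _ k) = k"
| "dtime (DA _ k) = k"

definition block_draws :: "nat \<Rightarrow> (nat \<times> nat) set \<Rightarrow> nat \<Rightarrow> nat \<Rightarrow> draw set" where
  "block_draws N E s L = {dr \<in> draw_index {1..N} E. s \<le> dtime dr \<and> dtime dr < s + L}"

definition good_block :: "nat \<Rightarrow> (nat \<times> nat) set \<Rightarrow> (draw \<Rightarrow> real) \<Rightarrow> nat \<Rightarrow> nat \<Rightarrow> bool" where
  "good_block N E d s L \<longleftrightarrow> (\<forall>dr\<in>block_draws N E s L. 1/2 \<le> d dr)"

lemma DP_in_draw_index: "DP j i k \<in> draw_index V E \<longleftrightarrow> i \<in> V \<and> j \<in> out_nb E i \<union> {i}"
  by (auto simp: draw_index_def)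

lemma DA_in_draw_index: "DA i k \<in> draw_index V E \<longleftrightarrow> i \<in> V"
  by (auto simp: draw_index_def)

lemma good_block_mat_seq_prod_ge:
  assumes E: "E \<subseteq> {1..N} \<times> {1..N}" and unit: "draws_in_unit_interval N E d" and "1 \<le> s"
    and good: "good_block N E d s L"
    and walks: "\<forall>a\<in>{1..N} \<times> UNIV. \<forall>b\<in>{1..N} \<times> UNIV. (b, a) \<in> pp_edges N E ^^ L"
    and "a \<in> {1..N} \<times> UNIV" and "b \<in> {1..N} \<times> UNIV"
  shows "(1 / (2 * (real N + 1))) ^ L \<le> mat_seq_prod ({1..N} \<times> UNIV) (pp_matrix E d) s L a b"
proof (rule mat_seq_prod_ge_power)
  show "pp_edges N E \<subseteq> ({1..N} \<times> UNIV) \<times> ({1..N} \<times> UNIV)"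
    unfolding pp_edges_def by auto
  show "0 \<le> pp_matrix E d (s + m) a b"
    if "a \<in> {1..N} \<times> UNIV" "b \<in> {1..N} \<times> UNIV" for m a b
    using pp_matrix_nonneg[OF E unit _ that] \<open>1 \<le> s\<close> by simp
  show "1 / (2 * (real N + 1)) \<le> pp_matrix E d (s + m) a b"
    if "m < L" "(b, a) \<in> pp_edges N E" for m a b
  proof (rule pp_matrix_edge_ge[OF E unit _ _ that(2)])
    show "\<forall>i\<in>{1..N}. (\<forall>j\<in>out_nb E i \<union> {i}. 1/2 \<le> d (DP j i (s + m))) \<and> 1/2 \<le> d (DA i (s + m))"
      using good \<open>m < L\<close>
      by (auto simp: good_block_def block_draws_def DP_in_draw_index DA_in_draw_index)
  qed (use \<open>1 \<le> s\<close> in simp)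
qed (use walks assms(6,7) in auto)

text \<open>At \<open>k = 0\<close> the weights may be negative, so the ratio argument starts at \<open>k = 2\<close>,
  the first time both substates of the second run are positive.\<close>
lemma pp_ratio_consensus:
  assumes "0 < N" and E: "E \<subseteq> {1..N} \<times> {1..N}" and unit: "draws_in_unit_interval N E d"
    and wden0: "\<forall>i\<in>{1..N}. wden E d i 0 \<noteq> 0"
    and "0 < L" and walks: "\<forall>a\<in>{1..N} \<times> UNIV. \<forall>b\<in>{1..N} \<times> UNIV. (b, a) \<in> pp_edges N E ^^ L"
    and good: "\<forall>m0. \<exists>m\<ge>m0. good_block N E d (2 + m * L) L"
    and "a \<in> {1..N} \<times> UNIV"
  shows "(\<lambda>k. stack (state1 E x0 d k) a / stack (state2 E d k) a) \<longlonglongrightarrow> (\<Sum>j=1..N. x0 j) / real N"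
proof -
  let ?W = "{1..N} \<times> (UNIV :: bool set)"
  have wden: "wden E d j k \<noteq> 0" if "j \<in> {1..N}" for j k
  proof (cases k)
    case 0
    then show ?thesis using wden0 that by simp
  next
    case (Suc k')
    then show ?thesis using wden_bounds(1)[OF E unit _ that, of k] by simp
  qed
  interpret ratio_consensus ?W "pp_matrix E d" "\<lambda>k. stack (state1 E x0 d k)"
    "\<lambda>k. stack (state2 E d k)" 2 "2 * (\<Sum>j=1..N. x0 j)" "2 * real N"
  proof
    show "finite ?W" and "?W \<noteq> {}" using \<open>0 < N\<close> by auto
    show "stack (state1 E x0 d (Suc k)) a = (\<Sum>b\<in>?W. pp_matrix E d k a b * stack (state1 E x0 d k) b)"
      "stack (state2 E d (Suc k)) a = (\<Sum>b\<in>?W. pp_matrix E d k a b * stack (state2 E d k) b)"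
      if "a \<in> ?W" for k a
      unfolding state1_def state2_def by (rule stack_pp_state_Suc[OF _ E that]; simp)+
    show "0 \<le> pp_matrix E d k a b" if "2 \<le> k" "a \<in> ?W" "b \<in> ?W" for k a b
      using pp_matrix_nonneg[OF E unit _ that(2,3)] that(1) by simp
    show "0 < stack (state2 E d k) a" if "2 \<le> k" "a \<in> ?W" for k a
      by (rule stack_state2_pos[OF E unit that])
    show "(\<Sum>a\<in>?W. stack (state1 E x0 d k) a) = 2 * (\<Sum>j=1..N. x0 j)" for k
      unfolding state1_def using sum_stack_pp_state[OF _ E wden] by (simp add: sum_distrib_left)
    show "(\<Sum>a\<in>?W. stack (state2 E d k) a) = 2 * real N" for k
      unfolding state2_def using sum_stack_pp_state[OF _ E wden] by simp
  qed
  have "(\<lambda>k. stack (state1 E x0 d k) a / stack (state2 E d k) a) \<longlonglongrightarrow>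
      (2 * (\<Sum>j=1..N. x0 j)) / (2 * real N)"
  proof (rule ratio_tendsto_average[OF _ _ \<open>0 < L\<close> _ \<open>a \<in> ?W\<close>])
    show "\<exists>m\<ge>m0. \<forall>a\<in>?W. \<forall>b\<in>?W.
        (1 / (2 * (real N + 1))) ^ L \<le> mat_seq_prod ?W (pp_matrix E d) (2 + m * L) L a b" for m0
    proof -
      obtain m where "m0 \<le> m" and "good_block N E d (2 + m * L) L"
        using good by blast
      then show ?thesis
        using good_block_mat_seq_prod_ge[OF E unit _ _ walks] by auto
    qed
  qed (auto intro!: power_le_one)
  then show ?thesis by simp
qed

section \<open>Almost sure properties of the random draws\<close>

instance draw :: countable
  by countable_datatype

lemma draw_density_unif: "1 \<le> dtime dr \<Longrightarrow> draw_density Mc dr = unif_density 0 1"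
  by (cases dr) (auto simp: draw_density_def)

lemma block_draws_finite_card:
  assumes "E \<subseteq> {1..N} \<times> {1..N}" and "1 \<le> s"
  shows "finite (block_draws N E s L)" and "card (block_draws N E s L) \<le> N * N * L + N * L"
proof -
  let ?P = "(\<lambda>(j, i, k). DP j i k) ` ({1..N} \<times> {1..N} \<times> {s..<s + L})"
  let ?A = "(\<lambda>(i, k). DA i k) ` ({1..N} \<times> {s..<s + L})"
  have sub: "block_draws N E s L \<subseteq> ?P \<union> ?A"
    using assms unfolding block_draws_def draw_index_def by (force simp: out_nb_def image_iff)
  have "card (?P \<union> ?A) \<le> card ?P + card ?A" by (rule card_Un_le)
  also have "card ?P \<le> card ({1..N} \<times> {1..N} \<times> {s..<s + L})" by (rule card_image_le) simp
  also have "card ?A \<le> card ({1..N} \<times> {s..<s + L})" by (rule card_image_le) simp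
  finally have "card (?P \<union> ?A) \<le> N * N * L + N * L" by (simp add: card_cartesian_product)
  moreover have "finite (?P \<union> ?A)" by simp
  ultimately show "finite (block_draws N E s L)" and "card (block_draws N E s L) \<le> N * N * L + N * L"
    using card_mono[OF _ sub] finite_subset[OF sub] by force+
qed

lemma block_draws_disjoint:
  assumes "m \<noteq> m'"
  shows "block_draws N E (s + m * L) L \<inter> block_draws N E (s + m' * L) L = {}"
proof -
  have "m = m'" if "s + m * L \<le> t" "t < s + m * L + L" "s + m' * L \<le> t" "t < s + m' * L + L"
    for t
  proof -
    have "m * L < Suc m' * L" and "m' * L < Suc m * L" using that by auto
    then show ?thesis by (simp only: mult_less_cancel2) linarith
  qed
  then show ?thesis
    using assms unfolding block_draws_def by blast
qed

context prob_space
begin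

lemma AE_unif_01:
  assumes "distributed M lborel Y (unif_density 0 1)"
  shows "AE \<omega> in M. 0 < Y \<omega> \<and> Y \<omega> < 1"
proof (subst distributed_AE2[OF assms])
  show "Measurable.pred lborel (\<lambda>x::real. 0 < x \<and> x < 1)" by measurable
  show "AE x in lborel. 0 < unif_density 0 1 x \<longrightarrow> 0 < x \<and> x < 1"
    by (intro AE_I2) (auto simp: unif_density_def indicator_def)
qed

lemma prob_unif_01_ge_half:
  assumes "distributed M lborel Y (unif_density 0 1)"
  shows "prob (Y -` {1/2..} \<inter> space M) = 1/2"
proof -
  have "emeasure M (Y -` {1/2..} \<inter> space M) = (\<integral>\<^sup>+x. unif_density 0 1 x * indicator {1/2..} x \<partial>lborel)"
    by (rule distributed_emeasure[OF assms]) simp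
  also have "\<dots> = (\<integral>\<^sup>+x. indicator {1/2..<1::real} x \<partial>lborel)"
    by (intro nn_integral_cong) (auto simp: unif_density_def indicator_def)
  also have "\<dots> = ennreal (1/2)" by simp
  finally have "ennreal (prob (Y -` {1/2..} \<inter> space M)) = ennreal (1/2)"
    by (simp only: emeasure_eq_measure)
  then show ?thesis
    by (rule ennreal_inj[THEN iffD1, rotated 2]) auto
qed

lemma prob_indep_misses_le:
  fixes Y :: "nat \<Rightarrow> 'a \<Rightarrow> 'b"
  assumes indep: "indep_vars M' Y UNIV" and sets: "\<And>m. A m \<in> sets (M' m)"
    and prob_ge: "\<And>m. q \<le> prob (Y m -` A m \<inter> space M)"
  shows "prob (\<Inter>m\<in>{m0..<m0 + Suc n}. Y m -` (space (M' m) - A m) \<inter> space M) \<le> (1 - q) ^ Suc n"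
proof -
  have Y_meas: "Y m \<in> measurable M (M' m)" for m
    using indep unfolding indep_vars_def by auto
  have prob_miss: "prob (Y m -` (space (M' m) - A m) \<inter> space M) \<le> 1 - q" for m
  proof -
    have "Y m -` (space (M' m) - A m) \<inter> space M = space M - (Y m -` A m \<inter> space M)"
      using measurable_space[OF Y_meas] by auto
    then show ?thesis
      using prob_compl[OF measurable_sets[OF Y_meas sets]] prob_ge[of m] by simp
  qed
  have "prob (\<Inter>m\<in>{m0..<m0 + Suc n}. Y m -` (space (M' m) - A m) \<inter> space M)
      = (\<Prod>m\<in>{m0..<m0 + Suc n}. prob (Y m -` (space (M' m) - A m) \<inter> space M))"
    using sets by (intro indep_varsD[OF indep]) auto
  also have "\<dots> \<le> (\<Prod>m\<in>{m0..<m0 + Suc n}. 1 - q)"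
    using prob_miss by (intro prod_mono) auto
  finally show ?thesis by simp
qed

lemma AE_frequently_indep:
  fixes Y :: "nat \<Rightarrow> 'a \<Rightarrow> 'b"
  assumes indep: "indep_vars M' Y UNIV" and sets: "\<And>m. A m \<in> sets (M' m)"
    and "0 < q" and prob_ge: "\<And>m. q \<le> prob (Y m -` A m \<inter> space M)"
  shows "AE \<omega> in M. \<forall>m0. \<exists>m\<ge>m0. Y m \<omega> \<in> A m"
proof -
  have Y_meas: "Y m \<in> measurable M (M' m)" for m
    using indep unfolding indep_vars_def by auto
  have "AE \<omega> in M. \<exists>m\<ge>m0. Y m \<omega> \<in> A m" for m0
  proof (rule AE_I')
    define run where "run n = (\<Inter>m\<in>{m0..<m0 + Suc n}. Y m -` (space (M' m) - A m) \<inter> space M)"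
      for n
    have run_events: "run n \<in> events" for n
      unfolding run_def using measurable_sets[OF Y_meas] sets by (intro sets.finite_INT) auto
    have "(\<lambda>n. (1 - q) ^ Suc n) \<longlonglongrightarrow> 0"
      using LIMSEQ_power_zero[of "1 - q"] \<open>0 < q\<close> prob_ge[of 0] prob_le_1[of "Y 0 -` A 0 \<inter> space M"]
      by (intro LIMSEQ_Suc) auto
    moreover have "prob (\<Inter>n. run n) \<le> (1 - q) ^ Suc n" for n
    proof -
      have "prob (\<Inter>n. run n) \<le> prob (run n)"
        using run_events by (intro finite_measure_mono) auto
      then show ?thesis
        using prob_indep_misses_le[OF indep sets prob_ge, of m0 n] unfolding run_def by linarith
    qed
    ultimately have "prob (\<Inter>n. run n) \<le> 0"
      by (intro LIMSEQ_le_const) auto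
    then show "(\<Inter>n. run n) \<in> null_sets M"
      using run_events by (auto simp: emeasure_eq_measure null_sets_def measure_le_0_iff)
    show "{\<omega> \<in> space M. \<not> (\<exists>m\<ge>m0. Y m \<omega> \<in> A m)} \<subseteq> (\<Inter>n. run n)"
      unfolding run_def using measurable_space[OF Y_meas] by auto
  qed
  then show ?thesis by (simp add: AE_all_countable)
qed

lemma AE_draws_in_unit_interval:
  assumes dist: "\<forall>d\<in>draw_index {1..N} E. distributed M lborel (X d) (draw_density Mc d)"
  shows "AE \<omega> in M. draws_in_unit_interval N E (\<lambda>d. X d \<omega>)"
proof -
  have "AE \<omega> in M. 0 < X dr \<omega> \<and> X dr \<omega> < 1"
    if "dr \<in> draw_index {1..N} E" and "1 \<le> dtime dr" for dr
    using dist that draw_density_unif by (intro AE_unif_01) metis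
  then have "AE \<omega> in M. \<forall>dr\<in>{dr \<in> draw_index {1..N} E. 1 \<le> dtime dr}. 0 < X dr \<omega> \<and> X dr \<omega> < 1"
    by (subst AE_ball_countable) auto
  then show ?thesis
    by (rule eventually_mono)
      (auto simp: draws_in_unit_interval_def DP_in_draw_index DA_in_draw_index)
qed

text \<open>At \<open>k = 0\<close> the normalizer of node \<open>i\<close> is a sum of independent Gaussians, hence
  Gaussian itself, and so nonzero almost surely.\<close>
lemma AE_wden0_nonzero:
  assumes "0 < Mc" and "E \<subseteq> {1..N} \<times> {1..N}"
    and ind: "indep_vars (\<lambda>_. borel) X (draw_index {1..N} E)"
    and dist: "\<forall>d\<in>draw_index {1..N} E. distributed M lborel (X d) (draw_density Mc d)"
  shows "AE \<omega> in M. \<forall>i\<in>{1..N}. wden E (\<lambda>d. X d \<omega>) i 0 \<noteq> 0"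
proof (subst AE_ball_countable)
  show "\<forall>i\<in>{1..N}. AE \<omega> in M. wden E (\<lambda>d. X d \<omega>) i 0 \<noteq> 0"
  proof
    fix i
    assume i: "i \<in> {1..N}"
    define J where "J = insert (DA i 0) ((\<lambda>j. DP j i 0) ` (out_nb E i \<union> {i}))"
    have fin_out: "finite (out_nb E i \<union> {i})"
      using out_nb_subset[OF assms(2) i] by (rule finite_subset) simp
    have J_index: "J \<subseteq> draw_index {1..N} E"
      unfolding J_def using i by (auto simp: DP_in_draw_index DA_in_draw_index)
    have wden_J: "wden E (\<lambda>d. X d \<omega>) i 0 = (\<Sum>dr\<in>J. X dr \<omega>)" for \<omega>
    proof -
      have "(\<Sum>dr\<in>J. X dr \<omega>) = X (DA i 0) \<omega> + (\<Sum>dr\<in>(\<lambda>j. DP j i 0) ` (out_nb E i \<union> {i}). X dr \<omega>)"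
        unfolding J_def using fin_out by (subst sum.insert) auto
      also have "(\<Sum>dr\<in>(\<lambda>j. DP j i 0) ` (out_nb E i \<union> {i}). X dr \<omega>) = (\<Sum>j\<in>out_nb E i \<union> {i}. X (DP j i 0) \<omega>)"
        by (subst sum.reindex) (auto intro: inj_onI)
      finally show ?thesis unfolding wden_def by simp
    qed
    have "distributed M lborel (\<lambda>\<omega>. \<Sum>dr\<in>J. X dr \<omega>)
      (normal_density (\<Sum>dr\<in>J. 0) (sqrt (\<Sum>dr\<in>J. (sqrt Mc)\<^sup>2)))"
    proof (rule sum_indep_normal)
      show "finite J" and "J \<noteq> {}" unfolding J_def using fin_out by auto
      show "indep_vars (\<lambda>_. borel) X J" by (rule indep_vars_subset[OF ind J_index])
      show "0 < sqrt Mc" using \<open>0 < Mc\<close> by simp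
      show "distributed M lborel (X dr) (normal_density 0 (sqrt Mc))" if "dr \<in> J" for dr
      proof -
        have "distributed M lborel (X dr) (draw_density Mc dr)"
          using dist J_index that by blast
        moreover have "draw_density Mc dr = (\<lambda>x. ennreal (normal_density 0 (sqrt Mc) x))"
          using that unfolding J_def by (auto simp: draw_density_def)
        ultimately show ?thesis by simp
      qed
    qed
    then have "AE \<omega> in M. (\<Sum>dr\<in>J. X dr \<omega>) \<noteq> 0"
      by (subst distributed_AE2) (auto intro: eventually_mono[OF AE_lborel_singleton[of 0]])
    then show "AE \<omega> in M. wden E (\<lambda>d. X d \<omega>) i 0 \<noteq> 0"
      by (simp add: wden_J)
  qed
qed simp

lemma prob_block_draws_all_ge_half:
  assumes ind: "indep_vars (\<lambda>_. borel) X (draw_index {1..N} E)"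
    and dist: "\<forall>d\<in>draw_index {1..N} E. distributed M lborel (X d) (draw_density Mc d)"
    and "1 \<le> s" and fin: "finite (block_draws N E s L)" and ne: "block_draws N E s L \<noteq> {}"
  shows "prob (\<Inter>dr\<in>block_draws N E s L. X dr -` {1/2..} \<inter> space M)
    = (1/2) ^ card (block_draws N E s L)"
proof -
  have index: "block_draws N E s L \<subseteq> draw_index {1..N} E"
    unfolding block_draws_def by auto
  have half: "prob (X dr -` {1/2..} \<inter> space M) = 1/2" if "dr \<in> block_draws N E s L" for dr
  proof (rule prob_unif_01_ge_half)
    have "1 \<le> dtime dr" using that \<open>1 \<le> s\<close> unfolding block_draws_def by auto
    then show "distributed M lborel (X dr) (unif_density 0 1)"
      using dist index that draw_density_unif by (metis subsetD)
  qed
  have "prob (\<Inter>dr\<in>block_draws N E s L. X dr -` {1/2..} \<inter> space M)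
      = (\<Prod>dr\<in>block_draws N E s L. prob (X dr -` {1/2..} \<inter> space M))"
    by (rule indep_varsD[OF ind ne fin index]) simp
  also have "\<dots> = (\<Prod>dr\<in>block_draws N E s L. 1/2)"
    using half by (rule prod.cong[OF refl])
  finally show ?thesis by simp
qed

lemma AE_good_blocks:
  assumes "0 < N" and "0 < L" and E: "E \<subseteq> {1..N} \<times> {1..N}"
    and ind: "indep_vars (\<lambda>_. borel) X (draw_index {1..N} E)"
    and dist: "\<forall>d\<in>draw_index {1..N} E. distributed M lborel (X d) (draw_density Mc d)"
  shows "AE \<omega> in M. \<forall>m0. \<exists>m\<ge>m0. good_block N E (\<lambda>d. X d \<omega>) (2 + m * L) L"
proof -
  define B where "B m = block_draws N E (2 + m * L) L" for m
  define K where "K = N * N * L + N * L"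
  define good where "good m = {f \<in> space (PiM (B m) (\<lambda>_. borel)). \<forall>dr\<in>B m. (1/2::real) \<le> f dr}"
    for m
  have B_index: "B m \<subseteq> draw_index {1..N} E" for m
    unfolding B_def block_draws_def by auto
  have B_fin: "finite (B m)" and B_card: "card (B m) \<le> K" for m
    unfolding B_def K_def using block_draws_finite_card[OF E] by auto
  have B_ne: "B m \<noteq> {}" for m
    using \<open>0 < N\<close> \<open>0 < L\<close> unfolding B_def block_draws_def
    by (auto simp: DA_in_draw_index intro!: exI[of _ "DA 1 (2 + m * L)"])
  have "disjoint_family_on B UNIV"
    unfolding disjoint_family_on_def B_def using block_draws_disjoint by blast
  then have indep: "indep_vars (\<lambda>m. PiM (B m) (\<lambda>_. borel)) (\<lambda>m \<omega>. restrict (\<lambda>dr. X dr \<omega>) (B m)) UNIV"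
    by (rule indep_vars_restrict[where K = B, OF ind B_index])
  have "AE \<omega> in M. \<forall>m0. \<exists>m\<ge>m0. restrict (\<lambda>dr. X dr \<omega>) (B m) \<in> good m"
  proof (rule AE_frequently_indep[OF indep])
    show "good m \<in> sets (PiM (B m) (\<lambda>_. borel))" for m
      unfolding good_def using B_fin[of m] by measurable
    show "0 < (1/2::real) ^ K" by simp
    show "(1/2) ^ K \<le> prob ((\<lambda>\<omega>. restrict (\<lambda>dr. X dr \<omega>) (B m)) -` good m \<inter> space M)" for m
    proof -
      have "(\<lambda>\<omega>. restrict (\<lambda>dr. X dr \<omega>) (B m)) -` good m \<inter> space M
          = (\<Inter>dr\<in>B m. X dr -` {1/2..} \<inter> space M)"
        using B_ne[of m] unfolding good_def by (auto simp: space_PiM)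
      moreover have "(1/2::real) ^ K \<le> (1/2) ^ card (B m)"
        using B_card[of m] by (intro power_decreasing) auto
      moreover have "prob (\<Inter>dr\<in>B m. X dr -` {1/2..} \<inter> space M) = (1/2) ^ card (B m)"
        unfolding B_def
        by (rule prob_block_draws_all_ge_half[OF ind dist _ B_fin[of m, unfolded B_def]
              B_ne[of m, unfolded B_def]]) simp
      ultimately show ?thesis by simp
    qed
  qed
  then show ?thesis
    by (rule eventually_mono) (auto simp: good_def good_block_def B_def space_PiM)
qed

end

theorem theorem1:
  fixes P :: "'w measure" and N :: nat and E :: "(nat \<times> nat) set"
    and Mc :: real and x0 :: "nat \<Rightarrow> real" and X :: "draw \<Rightarrow> 'w \<Rightarrow> real"
  assumes "prob_space P"
    and "N > 2"
    and "E \<subseteq> {1..N} \<times> {1..N}"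
    and "\<forall>i. (i, i) \<notin> E"
    and "strongly_connected {1..N} E"
    and "Mc > 0"
    and "prob_space.indep_vars P (\<lambda>_. borel) X (draw_index {1..N} E)"
    and "\<forall>d\<in>draw_index {1..N} E. distributed P lborel (X d) (draw_density Mc d)"
  shows "AE \<omega> in P. \<forall>i\<in>{1..N}.
     ((\<lambda>k. fst (state1 E x0 (\<lambda>d. X d \<omega>) k) i / fst (state2 E (\<lambda>d. X d \<omega>) k) i)
        \<longlonglongrightarrow> (\<Sum>j=1..N. x0 j) / real N)
   \<and> ((\<lambda>k. snd (state1 E x0 (\<lambda>d. X d \<omega>) k) i / snd (state2 E (\<lambda>d. X d \<omega>) k) i)
        \<longlonglongrightarrow> (\<Sum>j=1..N. x0 j) / real N)"
proof -
  interpret prob_space P by fact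
  have "0 < N" using \<open>N > 2\<close> by simp
  obtain L where "0 < L"
    and walks: "\<forall>a\<in>{1..N} \<times> UNIV. \<forall>b\<in>{1..N} \<times> UNIV. (b, a) \<in> pp_edges N E ^^ L"
    using relpow_pp_edges[OF assms(3,5)] by blast
  have "AE \<omega> in P. draws_in_unit_interval N E (\<lambda>d. X d \<omega>)"
    by (rule AE_draws_in_unit_interval[OF assms(8)])
  moreover have "AE \<omega> in P. \<forall>i\<in>{1..N}. wden E (\<lambda>d. X d \<omega>) i 0 \<noteq> 0"
    by (rule AE_wden0_nonzero[OF assms(6,3,7,8)])
  moreover have "AE \<omega> in P. \<forall>m0. \<exists>m\<ge>m0. good_block N E (\<lambda>d. X d \<omega>) (2 + m * L) L"
    by (rule AE_good_blocks[OF \<open>0 < N\<close> \<open>0 < L\<close> assms(3,7,8)])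
  ultimately show ?thesis
  proof eventually_elim
    case (elim \<omega>)
    note consensus = pp_ratio_consensus[OF \<open>0 < N\<close> assms(3) elim(1,2) \<open>0 < L\<close> walks elim(3)]
    show ?case
      using consensus[of "(i, False)" for i] consensus[of "(i, True)" for i] by simp
  qed
qed

end
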